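(* Let $y$ be a Lyndon word of length $n\ge 1$ over a totally ordered alphabet. Algorithm LeftLyndonTree (described in the context) applied to $y$ returns the root of a binary tree which is exactly the left Lyndon tree $\mathrm{LLT}(y)$ (with leaves $0,1,\dots,n-1$ in left-to-right order), and it runs in time $O(n)$, accessing letters of $y$ only through comparisons between letters.
   Context: Words are finite sequences $y=y[0]\cdots y[n-1]$ over a totally ordered alphabet. Lexicographic order $<$: $u<v$ if $u$ is a proper prefix of $v$, or $u=ras$, $v=rbt$ with $a<b$ letters. A Lyndon word is a non-empty word strictly smaller than each of its proper non-empty suffixes. Left Lyndon tree $\mathrm{LLT}(y)$ of a Lyndon word $y$: if $|y|=1$ it is a single leaf; otherwise $y=uv$ with $u$ the longest proper Lyndon prefix of $y$ (then $v$ is Lyndon), and $\mathrm{LLT}(y)$ has left subtree $\mathrm{LLT}(u)$ and right subtree $\mathrm{LLT}(v)$. Leaves, read left to right, are identified with positions $0,\dots,n-1$. Algorithm LeftLyndonTree (input: Lyndon word $y$ of length $n$; arrays lyns, root; internal nodes are fresh identifiers $\ge n$ with left/right child pointers): lyns[0] ← 1; root[0] ← 0; per ← 1; i ← 0. For j = 1 to n−1: root[j] ← j; if y[j] ≠ y[i] then { lyns[j] ← j+1; per ← j+1; i ← 0 } else { lyns[j] ← lyns[i]; i ← (i+1) mod per }; ℓ ← 1; k ← j−1; while ℓ < lyns[j]: { create a new internal node q with left child root[k] and right child root[j]; root[j] ← q; ℓ ← ℓ + lyns[k]; k ← k − lyns[k] }. Return root[n−1]. *)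

theory Defs
  imports Main "HOL-Library.While_Combinator"
begin

definition word_less :: "'a::linorder list \<Rightarrow> 'a list \<Rightarrow> bool" where
  "word_less u v \<longleftrightarrow> (u, v) \<in> lexord {(a, b). a < b}"

definition lyndon :: "'a::linorder list \<Rightarrow> bool" where
  "lyndon y \<longleftrightarrow> y \<noteq> [] \<and> (\<forall>k. 0 < k \<and> k < length y \<longrightarrow> word_less y (drop k y))"

definition longest_proper_lyndon_prefix :: "'a::linorder list \<Rightarrow> 'a list \<Rightarrow> bool" where
  "longest_proper_lyndon_prefix u y \<longleftrightarrow>
     0 < length u \<and> length u < length y \<and> u = take (length u) y \<and> lyndon u \<and>
     (\<forall>m. length u < m \<and> m < length y \<longrightarrow> \<not> lyndon (take m y))"

datatype ltree = Leaf nat | Node ltree ltree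

text \<open>is_llt y off t: t is the left Lyndon tree of y, leaves numbered from off\<close>
inductive is_llt :: "'a::linorder list \<Rightarrow> nat \<Rightarrow> ltree \<Rightarrow> bool" where
  llt_leaf: "length y = 1 \<Longrightarrow> is_llt y off (Leaf off)"
| llt_node: "\<lbrakk> length y \<ge> 2; longest_proper_lyndon_prefix u y;
              is_llt u off lt; is_llt (drop (length u) y) (off + length u) rt \<rbrakk>
             \<Longrightarrow> is_llt y off (Node lt rt)"

text \<open>The algorithm accesses the word only through the letter comparison oracle
  eq i j (meaning y[i] = y[j]). Internal nodes are represented directly as tree values.
  cost counts outer-loop iterations plus inner while-loop iterations.\<close>

record alg_state =
  lyns :: "nat \<Rightarrow> nat"
  root :: "nat \<Rightarrow> ltree"
  per :: nat
  ii :: nat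
  cost :: nat

definition alg_init :: alg_state where
  "alg_init = \<lparr> lyns = (\<lambda>_. 0)(0 := 1), root = (\<lambda>_. Leaf 0)(0 := Leaf 0),
               per = 1, ii = 0, cost = 0 \<rparr>"

text \<open>inner while loop; state (root[j], l, k, count)\<close>
definition inner_loop ::
  "(nat \<Rightarrow> nat) \<Rightarrow> (nat \<Rightarrow> ltree) \<Rightarrow> nat \<Rightarrow> (ltree \<times> nat \<times> nat \<times> nat) option" where
  "inner_loop ly rt j =
     while_option (\<lambda>(q, l, k, c). l < ly j)
                  (\<lambda>(q, l, k, c). (Node (rt k) q, l + ly k, k - ly k, Suc c))
                  (Leaf j, 1, j - 1, 0)"

definition alg_step :: "(nat \<Rightarrow> nat \<Rightarrow> bool) \<Rightarrow> nat \<Rightarrow> alg_state \<Rightarrow> alg_state option" where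
  "alg_step eq j s =
     (let s1 = (if \<not> eq j (ii s)
                then s\<lparr> lyns := (lyns s)(j := j + 1), per := j + 1, ii := 0 \<rparr>
                else s\<lparr> lyns := (lyns s)(j := lyns s (ii s)), ii := (ii s + 1) mod per s \<rparr>)
      in map_option (\<lambda>(q, l, k, c). s1\<lparr> root := (root s1)(j := q), cost := cost s1 + 1 + c \<rparr>)
           (inner_loop (lyns s1) (root s1) j))"

primrec alg_run :: "(nat \<Rightarrow> nat \<Rightarrow> bool) \<Rightarrow> nat \<Rightarrow> alg_state option" where
  "alg_run eq 0 = Some alg_init"
| "alg_run eq (Suc m) = Option.bind (alg_run eq m) (alg_step eq (Suc m))"

definition left_lyndon_tree :: "nat \<Rightarrow> (nat \<Rightarrow> nat \<Rightarrow> bool) \<Rightarrow> (ltree \<times> nat) option" where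
  "left_lyndon_tree n eq = map_option (\<lambda>s. (root s (n - 1), cost s)) (alg_run eq (n - 1))"

end

theory Submission
  imports Defs
begin

text \<open>The algorithm keeps, for every position \<open>j\<close>, the length \<open>lyns[j]\<close> of the longest Lyndon
  suffix of \<open>y[0..j]\<close> and its left Lyndon tree \<open>root[j]\<close>. The lengths come from Duval's
  argument: \<open>y[0..j]\<close> is a prefix of a power of the Lyndon word \<open>y[0..per)\<close>, and the next letter
  either exceeds the letter one period back, making the whole prefix Lyndon, or repeats it, in
  which case the longest Lyndon suffix is the one of the last incomplete period.

  The inner loop walks down the chain of longest Lyndon suffixes ending before \<open>j\<close> and merges
  them into the new longest Lyndon suffix. Consecutive factors of this chain are lexicographically
  nonincreasing, which is exactly what makes each merged left part a longest proper Lyndon prefix.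
  Every merge removes a factor from the chain and every position adds one, so the total number
  of inner iterations is at most \<open>n\<close>.\<close>

section \<open>Lexicographic order and Lyndon words\<close>

lemma word_less_iff_lexordp: "word_less u v \<longleftrightarrow> ord_class.lexordp u v"
  by (simp add: word_less_def lexordp_conv_lexord)

lemma word_less_irrefl: "\<not> word_less u u"
  by (simp add: word_less_iff_lexordp lexordp_irreflexive')

lemma word_less_trans: "word_less u v \<Longrightarrow> word_less v w \<Longrightarrow> word_less u w"
  unfolding word_less_iff_lexordp by (rule lexordp_trans)

lemma word_less_asym: "word_less u v \<Longrightarrow> \<not> word_less v u"
  using word_less_trans word_less_irrefl by blast

lemma word_less_linear: "word_less u v \<or> u = v \<or> word_less v u"
  unfolding word_less_iff_lexordp by (rule lexordp_linear)

lemma not_word_less_trans: "\<not> word_less v u \<Longrightarrow> \<not> word_less w v \<Longrightarrow> \<not> word_less w u"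
  using word_less_linear[of u v] word_less_trans[of w u v] by blast

lemma word_less_append_same: "word_less (x @ u) (x @ v) \<longleftrightarrow> word_less u v"
  unfolding word_less_def by (simp add: lexord_same_pref_iff)

lemma proper_prefix_word_less: "length u < length v \<Longrightarrow> take (length u) v = u \<Longrightarrow> word_less u v"
  by (simp add: word_less_def lexord_take_index_conv)

definition mismatch_at :: "'a::linorder list \<Rightarrow> 'a list \<Rightarrow> nat \<Rightarrow> bool" where
  "mismatch_at u v d \<longleftrightarrow> d < length u \<and> d < length v \<and> (\<forall>i<d. u!i = v!i) \<and> u!d < v!d"

lemma mismatch_at_imp_word_less: "mismatch_at u v d \<Longrightarrow> word_less u v"
proof -
  assume "mismatch_at u v d"
  then have "d < min (length u) (length v)" "take d u = take d v" "u!d < v!d"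
    unfolding mismatch_at_def by (auto intro: nth_equalityI)
  then show ?thesis
    unfolding word_less_def lexord_take_index_conv by blast
qed

lemma mismatch_at_append: "mismatch_at u v d \<Longrightarrow> mismatch_at (u @ a) (v @ b) d"
  unfolding mismatch_at_def by (auto simp: nth_append)

lemma word_less_imp_mismatch_at:
  assumes "word_less u v" and "\<not> (length u < length v \<and> take (length u) v = u)"
  shows "\<exists>d. mismatch_at u v d"
proof -
  obtain d where "d < min (length u) (length v)" "take d u = take d v" "u!d < v!d"
    using assms unfolding word_less_def lexord_take_index_conv by blast
  then show ?thesis
    unfolding mismatch_at_def by (metis min_less_iff_conj nth_take)
qed

lemma word_less_append_right:
  "word_less u v \<Longrightarrow> \<not> (length u < length v \<and> take (length u) v = u) \<Longrightarrow> word_less (u @ a) (v @ b)"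
  using word_less_imp_mismatch_at mismatch_at_append mismatch_at_imp_word_less by blast

lemma prefix_not_word_less: "take (length u) v = u \<Longrightarrow> \<not> word_less v u"
proof
  assume pre: "take (length u) v = u" and "word_less v u"
  moreover have "length u \<le> length v"
    using pre by (metis length_take min.bounded_iff order_refl)
  ultimately obtain d where "mismatch_at v u d"
    using word_less_imp_mismatch_at by fastforce
  then have "d < length u" "v!d < u!d" unfolding mismatch_at_def by auto
  moreover have "u!d = v!d" using pre \<open>d < length u\<close> by (metis nth_take)
  ultimately show False by simp
qed

lemma lyndon_less_suffix: "lyndon w \<Longrightarrow> 0 < k \<Longrightarrow> k < length w \<Longrightarrow> word_less w (drop k w)"
  unfolding lyndon_def by blast

lemma lyndon_singleton: "lyndon [a]"
  unfolding lyndon_def by auto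

text \<open>The key step is \<open>u v < v\<close>.\<close>
lemma lyndon_append:
  assumes u: "lyndon u" and v: "lyndon v" and uv: "word_less u v"
  shows "lyndon (u @ v)"
  unfolding lyndon_def
proof (intro conjI allI impI)
  show "u @ v \<noteq> []" using u by (simp add: lyndon_def)
  have uvv: "word_less (u @ v) v"
  proof (cases "length u < length v \<and> take (length u) v = u")
    case True
    then obtain w where vw: "v = u @ w" by (metis append_take_drop_id)
    have "0 < length u" using u by (simp add: lyndon_def)
    then have "word_less v (drop (length u) v)"
      using lyndon_less_suffix[OF v] True by simp
    then have "word_less v w" using vw by simp
    then have "word_less (u @ v) (u @ w)" using word_less_append_same by blast
    then show ?thesis using vw by simp
  next
    case False
    from word_less_append_right[OF uv False, of v "[]"] show ?thesis by simp
  qed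
  fix k assume k: "0 < k \<and> k < length (u @ v)"
  consider "k < length u" | "k = length u" | "length u < k" by linarith
  then show "word_less (u @ v) (drop k (u @ v))"
  proof cases
    case 1
    then have "word_less u (drop k u)" using lyndon_less_suffix[OF u] k by simp
    then have "word_less (u @ v) (drop k u @ v)" using word_less_append_right by fastforce
    then show ?thesis using 1 by simp
  next
    case 2
    then show ?thesis using uvv by simp
  next
    case 3
    then have "word_less v (drop (k - length u) v)" using lyndon_less_suffix[OF v] k by simp
    then show ?thesis using uvv word_less_trans 3 by simp
  qed
qed

definition factor :: "'a list \<Rightarrow> nat \<Rightarrow> nat \<Rightarrow> 'a list" where
  "factor y i j = take (j - i) (drop i y)"

lemma length_factor [simp]: "j \<le> length y \<Longrightarrow> length (factor y i j) = j - i"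
  unfolding factor_def by simp

lemma nth_factor: "j \<le> length y \<Longrightarrow> k < j - i \<Longrightarrow> factor y i j ! k = y ! (i + k)"
  unfolding factor_def by simp

lemma factor_append: "i \<le> j \<Longrightarrow> j \<le> k \<Longrightarrow> factor y i k = factor y i j @ factor y j k"
proof -
  assume "i \<le> j" "j \<le> k"
  then have "k - i = (j - i) + (k - j)" by simp
  then have "factor y i k = take (j - i) (drop i y) @ take (k - j) (drop (j - i) (drop i y))"
    unfolding factor_def by (simp add: take_add)
  also have "drop (j - i) (drop i y) = drop j y" using \<open>i \<le> j\<close> by simp
  finally show ?thesis unfolding factor_def .
qed

lemma take_factor: "i \<le> j \<Longrightarrow> j \<le> k \<Longrightarrow> k \<le> length y \<Longrightarrow> take (j - i) (factor y i k) = factor y i j"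
  using factor_append[of i j k y] by simp

lemma drop_factor: "i \<le> j \<Longrightarrow> j \<le> k \<Longrightarrow> k \<le> length y \<Longrightarrow> drop (j - i) (factor y i k) = factor y j k"
  using factor_append[of i j k y] by simp

lemma factor_whole: "factor y 0 (length y) = y"
  unfolding factor_def by simp

lemma factor_singleton: "i < length y \<Longrightarrow> factor y i (Suc i) = [y ! i]"
  unfolding factor_def by (simp add: take_Suc_conv_app_nth)

lemma factor_eqI:
  assumes "j \<le> length y" "j' \<le> length y" "j - i = j' - i'"
    and "\<And>k. k < j - i \<Longrightarrow> y ! (i + k) = y ! (i' + k)"
  shows "factor y i j = factor y i' j'"
  using assms by (intro nth_equalityI) (simp_all add: nth_factor)

lemma mismatch_at_factorI:
  assumes "k \<le> length y" "d < k - i" "d < k - j"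
    and "\<And>l. l < d \<Longrightarrow> y ! (i + l) = y ! (j + l)" and "y ! (i + d) < y ! (j + d)"
  shows "mismatch_at (factor y i k) (factor y j k) d"
  using assms unfolding mismatch_at_def by (simp add: nth_factor)

lemma factor_prefix_not_less:
  "i \<le> j \<Longrightarrow> j \<le> k \<Longrightarrow> k \<le> length y \<Longrightarrow> \<not> word_less (factor y i k) (factor y i j)"
  using prefix_not_word_less take_factor by (metis length_factor order.trans)

lemma factor_less_extend:
  assumes "i < j" "j < k" "k \<le> l" "l \<le> length y" "word_less (factor y i k) (factor y j k)"
  shows "word_less (factor y i l) (factor y j l)"
proof -
  have "\<not> length (factor y i k) < length (factor y j k)" using assms by simp
  then have "word_less (factor y i k @ factor y k l) (factor y j k @ factor y k l)"
    using word_less_append_right assms(5) by blast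
  then show ?thesis
    using factor_append[of i k l y] factor_append[of j k l y] assms by simp
qed

lemma lyndon_factor_less_suffix:
  assumes "lyndon (factor y i k)" "i < j" "j < k" "k \<le> length y"
  shows "word_less (factor y i k) (factor y j k)"
  using lyndon_less_suffix[OF assms(1), of "j - i"] drop_factor[of i j k y] assms by simp

lemma lyndon_factorI:
  assumes "i < k" "k \<le> length y" "\<And>j. i < j \<Longrightarrow> j < k \<Longrightarrow> word_less (factor y i k) (factor y j k)"
  shows "lyndon (factor y i k)"
  unfolding lyndon_def
proof (intro conjI allI impI)
  show "factor y i k \<noteq> []" using assms(1,2) by (metis length_factor less_numeral_extra(3) list.size(3) zero_less_diff)
  fix l assume l: "0 < l \<and> l < length (factor y i k)"
  then have "drop l (factor y i k) = factor y (i + l) k"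
    using drop_factor[of i "i + l" k y] assms(1,2) by auto
  moreover have "word_less (factor y i k) (factor y (i + l) k)"
    using assms l by (intro assms(3)) auto
  ultimately show "word_less (factor y i k) (drop l (factor y i k))" by simp
qed

lemma lyndon_factor_overlap:
  assumes x: "lyndon (factor y i k)" and w: "lyndon (factor y j l)"
    and ord: "i < j" "j < k" "k < l" "l \<le> length y"
  shows "lyndon (factor y i l)"
proof (rule lyndon_factorI)
  show "i < l" "l \<le> length y" using ord by auto
  have ij: "word_less (factor y i l) (factor y j l)"
    using factor_less_extend[OF ord(1,2) _ ord(4) lyndon_factor_less_suffix[OF x ord(1,2)]] ord by simp
  fix s assume s: "i < s" "s < l"
  consider "s < j" | "s = j" | "j < s" by linarith
  then show "word_less (factor y i l) (factor y s l)"
  proof cases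
    case 1
    then have "word_less (factor y i k) (factor y s k)" using lyndon_factor_less_suffix[OF x s(1)] ord by simp
    then show ?thesis using factor_less_extend[OF s(1), of k l] 1 ord by simp
  next
    case 2
    then show ?thesis using ij by simp
  next
    case 3
    then have "word_less (factor y j l) (factor y s l)" using lyndon_factor_less_suffix[OF w] s ord by simp
    then show ?thesis using ij word_less_trans by blast
  qed
qed

section \<open>Longest Lyndon suffixes\<close>

text \<open>\<open>max_lyndon_suffix y (j + 1)\<close> is the value \<open>lyns[j]\<close> computed by the algorithm.\<close>
definition is_max_lyndon_suffix :: "'a::linorder list \<Rightarrow> nat \<Rightarrow> nat \<Rightarrow> bool" where
  "is_max_lyndon_suffix y p L \<longleftrightarrow> 0 < L \<and> L \<le> p \<and> lyndon (factor y (p - L) p) \<and>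
     (\<forall>M. L < M \<and> M \<le> p \<longrightarrow> \<not> lyndon (factor y (p - M) p))"

definition max_lyndon_suffix :: "'a::linorder list \<Rightarrow> nat \<Rightarrow> nat" where
  "max_lyndon_suffix y p = (GREATEST L. 0 < L \<and> L \<le> p \<and> lyndon (factor y (p - L) p))"

lemma is_max_lyndon_suffix_max_lyndon_suffix:
  assumes p: "0 < p" "p \<le> length y"
  shows "is_max_lyndon_suffix y p (max_lyndon_suffix y p)"
proof -
  let ?P = "\<lambda>L. 0 < L \<and> L \<le> p \<and> lyndon (factor y (p - L) p)"
  have "factor y (p - 1) p = [y ! (p - 1)]" using factor_singleton[of "p - 1" y] p by simp
  then have P1: "?P 1" using p lyndon_singleton by simp
  have bound: "\<And>L. ?P L \<Longrightarrow> L \<le> p" by simp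
  have max: "?P (max_lyndon_suffix y p)"
    unfolding max_lyndon_suffix_def using GreatestI_nat[of ?P 1 p, OF P1 bound] .
  have greatest: "M \<le> max_lyndon_suffix y p" if "?P M" for M
    unfolding max_lyndon_suffix_def using Greatest_le_nat[of ?P M p, OF that bound] .
  have "\<not> lyndon (factor y (p - M) p)" if M: "max_lyndon_suffix y p < M" "M \<le> p" for M
  proof
    assume "lyndon (factor y (p - M) p)"
    with M have "?P M" by simp
    with M(1) show False using greatest[of M] by simp
  qed
  with max show ?thesis unfolding is_max_lyndon_suffix_def by blast
qed

lemma is_max_lyndon_suffix_unique: "is_max_lyndon_suffix y p L \<Longrightarrow> is_max_lyndon_suffix y p L' \<Longrightarrow> L = L'"
  unfolding is_max_lyndon_suffix_def by (meson linorder_neqE_nat)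

lemma max_lyndon_suffix_eqI:
  "0 < p \<Longrightarrow> p \<le> length y \<Longrightarrow> is_max_lyndon_suffix y p L \<Longrightarrow> max_lyndon_suffix y p = L"
  using is_max_lyndon_suffix_max_lyndon_suffix is_max_lyndon_suffix_unique by blast

lemma max_lyndon_suffix_whole:
  "0 < p \<Longrightarrow> p \<le> length y \<Longrightarrow> lyndon (factor y 0 p) \<Longrightarrow> max_lyndon_suffix y p = p"
  by (rule max_lyndon_suffix_eqI) (auto simp: is_max_lyndon_suffix_def)

lemma max_lyndon_suffix_pos: "0 < p \<Longrightarrow> p \<le> length y \<Longrightarrow> 0 < max_lyndon_suffix y p"
  using is_max_lyndon_suffix_max_lyndon_suffix unfolding is_max_lyndon_suffix_def by blast

lemma max_lyndon_suffix_le: "0 < p \<Longrightarrow> p \<le> length y \<Longrightarrow> max_lyndon_suffix y p \<le> p"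
  using is_max_lyndon_suffix_max_lyndon_suffix unfolding is_max_lyndon_suffix_def by blast

lemma lyndon_max_lyndon_suffix:
  "0 < p \<Longrightarrow> p \<le> length y \<Longrightarrow> lyndon (factor y (p - max_lyndon_suffix y p) p)"
  using is_max_lyndon_suffix_max_lyndon_suffix unfolding is_max_lyndon_suffix_def by blast

lemma not_lyndon_longer_suffix:
  assumes "0 < p" "p \<le> length y" "i < p - max_lyndon_suffix y p"
  shows "\<not> lyndon (factor y i p)"
proof -
  have "max_lyndon_suffix y p < p - i" "p - i \<le> p" using assms(3) by auto
  then have "\<not> lyndon (factor y (p - (p - i)) p)"
    using is_max_lyndon_suffix_max_lyndon_suffix[OF assms(1,2)] unfolding is_max_lyndon_suffix_def by blast
  then show ?thesis using assms(3) by simp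
qed

text \<open>The number of factors of the chain of longest Lyndon suffixes that decomposes \<open>y[0..p)\<close>.
  It is the potential of the amortised cost bound: each of the \<open>c\<close> iterations of the inner loop at
  position \<open>j\<close> removes one factor and the new letter adds one. The \<open>max 1\<close> only serves
  termination.\<close>
function suffix_factor_count :: "'a::linorder list \<Rightarrow> nat \<Rightarrow> nat" where
  "suffix_factor_count y p =
     (if p = 0 then 0 else Suc (suffix_factor_count y (p - max 1 (max_lyndon_suffix y p))))"
  by auto
termination by (relation "measure (\<lambda>(y, p). p)") auto

declare suffix_factor_count.simps [simp del]

lemma suffix_factor_count_step:
  "0 < p \<Longrightarrow> p \<le> length y \<Longrightarrow>
     suffix_factor_count y p = Suc (suffix_factor_count y (p - max_lyndon_suffix y p))"
proof -
  assume "0 < p" "p \<le> length y"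
  then have "max 1 (max_lyndon_suffix y p) = max_lyndon_suffix y p"
    using max_lyndon_suffix_pos[of p y] by simp
  then show ?thesis using \<open>0 < p\<close> by (simp add: suffix_factor_count.simps[of y p])
qed


text \<open>Otherwise the two factors would concatenate to a longer Lyndon suffix.\<close>
lemma max_lyndon_suffixes_nonincreasing:
  assumes q: "0 < q" "q < p" "p \<le> length y" and start: "q = p - max_lyndon_suffix y p"
  shows "\<not> word_less (factor y (q - max_lyndon_suffix y q) q) (factor y q p)"
proof
  define i where "i = q - max_lyndon_suffix y q"
  assume less: "word_less (factor y i q) (factor y q p)"
  have p: "0 < p" using q by simp
  have "lyndon (factor y i q)" using lyndon_max_lyndon_suffix[of q y] q unfolding i_def by simp
  moreover have "lyndon (factor y q p)" using lyndon_max_lyndon_suffix[OF p q(3)] unfolding start .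
  ultimately have "lyndon (factor y i q @ factor y q p)" using lyndon_append less by blast
  moreover have "factor y i q @ factor y q p = factor y i p"
    using factor_append[of i q p y] q unfolding i_def by simp
  ultimately have lyn: "lyndon (factor y i p)" by simp
  have "q \<le> length y" using q by linarith
  then have "i < q" using max_lyndon_suffix_pos[of q y] q(1) unfolding i_def by simp
  then have "i < p - max_lyndon_suffix y p" unfolding start[symmetric] .
  with lyn not_lyndon_longer_suffix[OF p q(3)] show False by blast
qed

section \<open>Duval's periodicity argument\<close>

definition has_period :: "'a list \<Rightarrow> nat \<Rightarrow> nat \<Rightarrow> bool" where
  "has_period y P N \<longleftrightarrow> (\<forall>i<N. y ! i = y ! (i mod P))"

lemma has_period_nth_eq:
  "has_period y P N \<Longrightarrow> i < N \<Longrightarrow> j < N \<Longrightarrow> i mod P = j mod P \<Longrightarrow> y ! i = y ! j"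
  unfolding has_period_def by metis

lemma mod_add_multiple: "b mod P = 0 \<Longrightarrow> (b + i) mod P = i mod (P::nat)"
  by (metis add_0 mod_add_left_eq)

lemma has_period_shift:
  assumes "has_period y P N" "s + i < N"
  shows "y ! (s mod P + i) = y ! (s + i)"
proof (rule has_period_nth_eq[OF assms(1)])
  show "s mod P + i < N" using assms(2) mod_less_eq_dividend[of s P] by linarith
  show "(s mod P + i) mod P = (s + i) mod P" by (simp add: mod_add_left_eq)
qed (use assms in simp)

lemma lyndon_root_mismatch:
  assumes "lyndon (factor y 0 P)" "0 < s" "s < P" "P \<le> length y"
  obtains d where "d < P - s" "\<And>i. i < d \<Longrightarrow> y ! i = y ! (s + i)" "y ! d < y ! (s + d)"
proof -
  have "word_less (factor y 0 P) (factor y s P)"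
    using lyndon_factor_less_suffix[OF assms(1)] assms by simp
  moreover have "\<not> length (factor y 0 P) < length (factor y s P)" using assms by simp
  ultimately obtain d where "mismatch_at (factor y 0 P) (factor y s P) d"
    using word_less_imp_mismatch_at by blast
  then have d: "d < P - s" "\<forall>i<d. factor y 0 P ! i = factor y s P ! i"
      "factor y 0 P ! d < factor y s P ! d"
    unfolding mismatch_at_def using assms(4) by auto
  show thesis
  proof (rule that[OF d(1)])
    fix i assume "i < d"
    then show "y ! i = y ! (s + i)" using d nth_factor[OF assms(4)] by simp
  next
    show "y ! d < y ! (s + d)" using d nth_factor[OF assms(4)] by simp
  qed
qed

text \<open>Otherwise the suffix of \<open>y\<close> starting at the last multiple of \<open>P\<close> would be smaller than \<open>y\<close>.\<close>
lemma lyndon_periodic_next_letter: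
  assumes "lyndon y" "has_period y P J" "0 < P" "P \<le> J" "J < length y"
  shows "y ! (J mod P) \<le> y ! J"
proof (rule ccontr)
  define r e where "r = J mod P" and "e = J - J mod P"
  assume "\<not> y ! (J mod P) \<le> y ! J"
  then have down: "y ! J < y ! r" unfolding r_def by simp
  have r: "r < P" "J = e + r" unfolding r_def e_def using assms(3) by auto
  have e: "e mod P = 0" "0 < e" using assms(3,4) r unfolding e_def r_def
    by (simp_all add: minus_mod_eq_mult_div div_greater_zero_iff)
  have "mismatch_at (drop e y) y r"
    unfolding mismatch_at_def
  proof (intro conjI allI impI)
    show "r < length (drop e y)" "r < length y" using r assms(5) by auto
    fix i assume "i < r"
    then show "drop e y ! i = y ! i"
      using has_period_nth_eq[OF assms(2), of "e + i" i] r mod_add_multiple[OF e(1)] assms(5) by simp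
  next
    show "drop e y ! r < y ! r" using down r assms(5) by simp
  qed
  then have "word_less (drop e y) y" by (rule mismatch_at_imp_word_less)
  moreover have "word_less y (drop e y)" using lyndon_less_suffix[OF assms(1) e(2)] r assms(5) by simp
  ultimately show False using word_less_asym by blast
qed

text \<open>Within one period the Lyndon root supplies a mismatch in favour of the prefix; if that
  mismatch lies beyond \<open>y[J]\<close>, the new letter supplies it instead.\<close>
lemma periodic_extension_mismatch:
  assumes per: "has_period y P J" and root: "lyndon (factor y 0 P)"
    and P: "0 < P" "P \<le> J" "J < length y" and up: "y ! (J mod P) < y ! J"
    and s: "0 < s" "s \<le> J"
  shows "\<exists>d \<le> J - s. (\<forall>i<d. y ! i = y ! (s + i)) \<and> y ! d < y ! (s + d)"
proof -
  define m where "m = J - s"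
  have J: "J mod P < J" using P by (meson mod_less_divisor less_le_trans)
  have shift: "y ! (s mod P + i) = y ! (s + i)" if "i < m" for i
    using has_period_shift[OF per] that unfolding m_def by simp
  have last: "y ! (J mod P) < y ! (s + m)" using up s unfolding m_def by simp
  show ?thesis
  proof (cases "s mod P = 0")
    case True
    have "m mod P = J mod P" using mod_add_multiple[OF True, of m] s unfolding m_def by simp
    then have "y ! m = y ! (J mod P)"
      using has_period_nth_eq[OF per, of m "J mod P"] s J unfolding m_def by simp
    then show ?thesis using shift True last by (intro exI[of _ m]) (simp add: m_def)
  next
    case False
    define s' where "s' = s mod P"
    have s': "0 < s'" "s' < P" using False P unfolding s'_def by auto
    obtain d0 where d0: "d0 < P - s'" "\<And>i. i < d0 \<Longrightarrow> y ! i = y ! (s' + i)" "y ! d0 < y ! (s' + d0)"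
      using lyndon_root_mismatch[OF root s'] P by auto
    show ?thesis
    proof (cases "d0 < m")
      case True
      then show ?thesis using d0 shift unfolding s'_def by (intro exI[of _ d0]) (simp add: m_def)
    next
      case False
      have "y ! m \<le> y ! (s' + m)" using d0 False by (cases "m = d0") auto
      also have "y ! (s' + m) = y ! (J mod P)"
      proof (rule has_period_nth_eq[OF per])
        show "s' + m < J" "J mod P < J" using d0(1) False P J by auto
        show "(s' + m) mod P = J mod P mod P"
          using mod_add_left_eq[of s P "J - s"] s unfolding s'_def m_def by simp
      qed
      finally have "y ! m < y ! (s + m)" using last by simp
      then show ?thesis using d0 False shift unfolding s'_def by (intro exI[of _ m]) (simp add: m_def)
    qed
  qed
qed

lemma lyndon_periodic_extension:
  assumes per: "has_period y P J" and root: "lyndon (factor y 0 P)"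
    and P: "0 < P" "P \<le> J" "J < length y" and up: "y ! (J mod P) < y ! J"
  shows "lyndon (factor y 0 (Suc J))"
proof (rule lyndon_factorI)
  show "0 < Suc J" "Suc J \<le> length y" using P by auto
  fix s assume s: "0 < s" "s < Suc J"
  obtain d where "d \<le> J - s" "\<forall>i<d. y ! i = y ! (s + i)" "y ! d < y ! (s + d)"
    using periodic_extension_mismatch[OF per root P up s(1)] s by auto
  then have "mismatch_at (factor y 0 (Suc J)) (factor y s (Suc J)) d"
    using P s by (intro mismatch_at_factorI) auto
  then show "word_less (factor y 0 (Suc J)) (factor y s (Suc J))"
    by (rule mismatch_at_imp_word_less)
qed

lemma factor_not_less_shifted_prefix:
  assumes "s \<le> b" "N \<le> length y" "\<And>i. i < N - b \<Longrightarrow> y ! (s + i) = y ! (b + i)"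
  shows "\<not> word_less (factor y s N) (factor y b N)"
proof (cases "b \<le> N")
  case True
  have "take (N - b) (factor y s N) = factor y s (s + (N - b))"
    using take_factor[of s "s + (N - b)" N y] assms(1,2) True by simp
  also have "\<dots> = factor y b N"
    using assms True by (intro factor_eqI) auto
  finally show ?thesis
    using prefix_not_word_less[of "factor y b N" "factor y s N"] assms(2) True by simp
next
  case False
  then show ?thesis unfolding factor_def by (simp add: word_less_def)
qed

lemma periodic_suffix_not_less:
  assumes per: "has_period y P N" and root: "lyndon (factor y 0 P)" and "0 < P" "N \<le> length y"
    and b: "b mod P = 0" "s < b" "b \<le> N"
  shows "\<not> word_less (factor y s N) (factor y b N)"
proof -
  have "P \<le> b" using dvd_imp_le[of P b] b by (simp add: dvd_eq_mod_eq_0)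
  have bshift: "y ! (b + i) = y ! i" if "b + i < N" for i
    using has_period_shift[OF per that] b(1) by simp
  have sshift: "y ! (s mod P + i) = y ! (s + i)" if "s + i < N" for i
    using has_period_shift[OF per that] .
  show ?thesis
  proof (cases "s mod P = 0")
    case True
    then show ?thesis using bshift sshift b assms(4) by (intro factor_not_less_shifted_prefix) auto
  next
    case False
    define s' where "s' = s mod P"
    have s': "0 < s'" "s' < P" using False \<open>0 < P\<close> unfolding s'_def by auto
    obtain d0 where d0: "d0 < P - s'" "\<And>i. i < d0 \<Longrightarrow> y ! i = y ! (s' + i)" "y ! d0 < y ! (s' + d0)"
      using lyndon_root_mismatch[OF root s'] \<open>P \<le> b\<close> b assms(4) by auto
    show ?thesis
    proof (cases "d0 < N - b")
      case True
      have "mismatch_at (factor y b N) (factor y s N) d0"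
        using True d0 bshift sshift b assms(4) unfolding s'_def by (intro mismatch_at_factorI) auto
      then show ?thesis using mismatch_at_imp_word_less word_less_asym by blast
    next
      case False
      then show ?thesis using d0 bshift sshift b assms(4) unfolding s'_def
        by (intro factor_not_less_shifted_prefix) auto
    qed
  qed
qed

text \<open>The case \<open>y[J] = y[J mod P]\<close> of Duval's argument: the longest Lyndon suffix is repeated
  from the last incomplete period.\<close>
lemma max_lyndon_suffix_periodic:
  assumes per: "has_period y P (Suc J)" and root: "lyndon (factor y 0 P)"
    and P: "0 < P" "P \<le> J" "J < length y"
    and L: "is_max_lyndon_suffix y (Suc (J mod P)) L"
  shows "is_max_lyndon_suffix y (Suc J) L"
proof -
  define r e where "r = J mod P" and "e = J - J mod P"
  have r: "r < P" "J = e + r" unfolding r_def e_def using P by auto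
  have e: "e mod P = 0" unfolding e_def by (simp add: minus_mod_eq_mult_div)
  have L': "0 < L" "L \<le> Suc r" "lyndon (factor y (Suc r - L) (Suc r))"
    "\<And>M. L < M \<Longrightarrow> M \<le> Suc r \<Longrightarrow> \<not> lyndon (factor y (Suc r - M) (Suc r))"
    using L unfolding is_max_lyndon_suffix_def r_def by auto
  have shift: "factor y (e + a) (Suc J) = factor y a (Suc r)" if "a \<le> Suc r" for a
  proof (rule factor_eqI)
    show "Suc J \<le> length y" "Suc r \<le> length y" "Suc J - (e + a) = Suc r - a" using P r by auto
    fix i assume "i < Suc J - (e + a)"
    then show "y ! (e + a + i) = y ! (a + i)"
      using has_period_nth_eq[OF per, of "e + (a + i)" "a + i"] mod_add_multiple[OF e] r that
      by (simp add: add.assoc)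
  qed
  have longer: "\<not> lyndon (factor y s (Suc J))" if s: "s < Suc J - L" for s
  proof (cases "e \<le> s")
    case True
    then show ?thesis using shift[of "s - e"] L'(4)[of "Suc J - s"] s r by simp
  next
    case False
    show ?thesis
    proof
      assume "lyndon (factor y s (Suc J))"
      then have "word_less (factor y s (Suc J)) (factor y e (Suc J))"
        by (rule lyndon_factor_less_suffix) (use False r P in auto)
      then show False using periodic_suffix_not_less[OF per root P(1) _ e] False r P by simp
    qed
  qed
  show ?thesis
    unfolding is_max_lyndon_suffix_def
  proof (intro conjI allI impI)
    show "0 < L" "L \<le> Suc J" using L' r by auto
    show "lyndon (factor y (Suc J - L) (Suc J))"
      using shift[of "Suc r - L"] L' r by (simp add: Suc_diff_le)
    fix M assume "L < M \<and> M \<le> Suc J"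
    then show "\<not> lyndon (factor y (Suc J - M) (Suc J))" by (intro longer) linarith
  qed
qed

section \<open>The inner loop\<close>

lemma max_lyndon_suffix_nested:
  assumes "e - max_lyndon_suffix y e < p" "p < e" "e \<le> length y"
  shows "e - max_lyndon_suffix y e \<le> p - max_lyndon_suffix y p"
proof (rule ccontr)
  define t where "t = p - max_lyndon_suffix y p"
  assume "\<not> e - max_lyndon_suffix y e \<le> p - max_lyndon_suffix y p"
  then have t: "t < e - max_lyndon_suffix y e" unfolding t_def by simp
  have p: "0 < p" "p \<le> length y" using assms by auto
  have "t < p" using max_lyndon_suffix_pos[OF p] p(1) unfolding t_def by simp
  then have "lyndon (factor y t e)"
    using lyndon_factor_overlap[OF lyndon_max_lyndon_suffix[OF p] lyndon_max_lyndon_suffix[of e y]] t assms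
    unfolding t_def by simp
  then show False using not_lyndon_longer_suffix[of e y t] t assms by simp
qed

text \<open>If \<open>M = y[t..p)\<close> is Lyndon, this prevents every \<open>y[t..m)\<close> with \<open>p < m < e\<close> from being Lyndon.\<close>
definition bounded_factors :: "'a::linorder list \<Rightarrow> nat \<Rightarrow> nat \<Rightarrow> 'a list \<Rightarrow> bool" where
  "bounded_factors y p e M \<longleftrightarrow>
     (\<forall>m. p < m \<and> m < e \<longrightarrow> (\<exists>b. p \<le> b \<and> b < m \<and> \<not> word_less M (factor y b m)))"

lemma bounded_factors_Suc: "bounded_factors y p (Suc p) M"
  unfolding bounded_factors_def by auto

lemma bounded_factors_mono:
  "bounded_factors y p e M \<Longrightarrow> \<not> word_less M' M \<Longrightarrow> bounded_factors y p e M'"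
  unfolding bounded_factors_def using not_word_less_trans by blast

lemma bounded_factors_extend:
  assumes "t < p" "p \<le> e" "e \<le> length y" "bounded_factors y p e (factor y t p)"
  shows "bounded_factors y t e (factor y t p)"
  unfolding bounded_factors_def
proof (intro allI impI)
  fix m assume m: "t < m \<and> m < e"
  show "\<exists>b. t \<le> b \<and> b < m \<and> \<not> word_less (factor y t p) (factor y b m)"
  proof (cases "m \<le> p")
    case True
    then show ?thesis using factor_prefix_not_less[of t m p y] m assms by auto
  next
    case False
    with m have "p < m \<and> m < e" by simp
    then obtain b where "p \<le> b" "b < m" "\<not> word_less (factor y t p) (factor y b m)"
      using assms(4) unfolding bounded_factors_def by blast
    then show ?thesis using assms(1) by (intro exI[of _ b]) auto
  qed
qed

lemma longest_proper_lyndon_prefix_factor: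
  assumes lyn: "lyndon (factor y t p)" and ord: "t < p" "p < e" "e \<le> length y"
    and bounded: "bounded_factors y p e (factor y t p)"
  shows "longest_proper_lyndon_prefix (factor y t p) (factor y t e)"
  unfolding longest_proper_lyndon_prefix_def
proof (intro conjI allI impI)
  show "0 < length (factor y t p)" "length (factor y t p) < length (factor y t e)"
    using ord by auto
  show "factor y t p = take (length (factor y t p)) (factor y t e)"
    using take_factor[of t p e y] ord by simp
  show "lyndon (factor y t p)" by (rule lyn)
  fix n assume n: "length (factor y t p) < n \<and> n < length (factor y t e)"
  define m where "m = t + n"
  have m: "p < m" "m < e" using n ord unfolding m_def by auto
  have prefix: "take n (factor y t e) = factor y t m"
    using take_factor[of t m e y] m ord unfolding m_def by simp
  obtain b where b: "p \<le> b" "b < m" "\<not> word_less (factor y t p) (factor y b m)"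
    using bounded m unfolding bounded_factors_def by blast
  show "\<not> lyndon (take n (factor y t e))"
  proof
    assume "lyndon (take n (factor y t e))"
    then have "word_less (factor y t m) (factor y b m)"
      unfolding prefix by (rule lyndon_factor_less_suffix) (use b ord m in auto)
    moreover have "word_less (factor y t p) (factor y t m)"
      using proper_prefix_word_less[of "factor y t p" "factor y t m"] take_factor[of t p m y] m ord by simp
    ultimately show False using b(3) word_less_trans by blast
  qed
qed

lemma is_llt_factor_Node:
  assumes "lyndon (factor y t p)" "t < p" "p < e" "e \<le> length y" "bounded_factors y p e (factor y t p)"
    and "is_llt (factor y t p) t lt" "is_llt (factor y p e) p rt"
  shows "is_llt (factor y t e) t (Node lt rt)"
proof (rule llt_node)
  show "2 \<le> length (factor y t e)" using assms(2-4) by simp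
  show "longest_proper_lyndon_prefix (factor y t p) (factor y t e)"
    using longest_proper_lyndon_prefix_factor assms(1-5) .
  show "is_llt (drop (length (factor y t p)) (factor y t e)) (t + length (factor y t p)) rt"
    using drop_factor[of t p e y] assms(2-4,7) by simp
qed (rule assms(6))

lemma bounded_factors_next_suffix:
  assumes "0 < t" "t < p" "p \<le> e" "e \<le> length y" and t: "t = p - max_lyndon_suffix y p"
    and "bounded_factors y p e (factor y t p)"
  shows "bounded_factors y t e (factor y (t - max_lyndon_suffix y t) t)"
proof (rule bounded_factors_mono)
  show "bounded_factors y t e (factor y t p)" using bounded_factors_extend assms(2-4,6) .
  show "\<not> word_less (factor y (t - max_lyndon_suffix y t) t) (factor y t p)"
    using max_lyndon_suffixes_nonincreasing[OF assms(1,2) _ t] assms(3,4) by simp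
qed

text \<open>The state \<open>(q, \<ell>, k, c)\<close> of the inner loop at position \<open>j\<close>, where \<open>q = root[j]\<close> and \<open>c\<close> counts
  the iterations. The last conjunct is what makes the next merge produce a longest proper
  Lyndon prefix.\<close>
definition inner_inv :: "'a::linorder list \<Rightarrow> nat \<Rightarrow> ltree \<Rightarrow> nat \<Rightarrow> nat \<Rightarrow> nat \<Rightarrow> bool" where
  "inner_inv y j q l k c \<longleftrightarrow>
     1 \<le> l \<and> l \<le> max_lyndon_suffix y (Suc j) \<and> k = j - l \<and>
     is_llt (factor y (Suc j - l) (Suc j)) (Suc j - l) q \<and>
     c + suffix_factor_count y (Suc j - l) = suffix_factor_count y j \<and>
     (0 < Suc j - l \<longrightarrow> bounded_factors y (Suc j - l) (Suc j)
        (factor y (Suc j - l - max_lyndon_suffix y (Suc j - l)) (Suc j - l)))"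

lemma inner_inv_step:
  fixes y :: "'a::linorder list"
  assumes j: "Suc j \<le> length y"
    and ly: "\<forall>i \<le> j. ly i = max_lyndon_suffix y (Suc i)"
    and rt: "\<forall>i < j. is_llt (factor y (Suc i - ly i) (Suc i)) (Suc i - ly i) (rt i)"
    and inv: "inner_inv y j q l k c" and lt: "l < ly j"
  shows "inner_inv y j (Node (rt k) q) (l + ly k) (k - ly k) (Suc c)"
proof -
  define p t where "p = Suc j - l" and "t = Suc j - l - max_lyndon_suffix y (Suc j - l)"
  have I: "1 \<le> l" "l \<le> max_lyndon_suffix y (Suc j)" "k = j - l" "is_llt (factor y p (Suc j)) p q"
    "c + suffix_factor_count y p = suffix_factor_count y j"
    "0 < p \<longrightarrow> bounded_factors y p (Suc j) (factor y t p)"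
    using inv unfolding inner_inv_def p_def t_def by auto
  have t: "t = p - max_lyndon_suffix y p" unfolding p_def t_def ..
  have L: "max_lyndon_suffix y (Suc j) \<le> Suc j" using max_lyndon_suffix_le[of "Suc j" y] j by simp
  then have p: "0 < p" "p \<le> j" "p \<le> length y" "Suc j - max_lyndon_suffix y (Suc j) < p"
    using I(1) lt ly j unfolding p_def by auto
  have k: "Suc k = p" "k < j" using I(1,3) p unfolding p_def by auto
  have lyk: "ly k = max_lyndon_suffix y p" using ly k by simp
  have tp: "t < p" using max_lyndon_suffix_pos[OF p(1,3)] p(1) unfolding t by simp
  have St: "Suc j - max_lyndon_suffix y (Suc j) \<le> t"
    using max_lyndon_suffix_nested[OF p(4)] p j unfolding t by simp
  have lyn: "lyndon (factor y t p)" using lyndon_max_lyndon_suffix[OF p(1,3)] unfolding t .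
  have bounded: "bounded_factors y p (Suc j) (factor y t p)" using I(6) p by simp
  have "is_llt (factor y t p) t (rt k)" using rt k lyk unfolding t by fastforce
  then have tree: "is_llt (factor y t (Suc j)) t (Node (rt k) q)"
    using is_llt_factor_Node[OF lyn tp _ j bounded _ I(4)] p by simp
  have count: "suffix_factor_count y p = Suc (suffix_factor_count y t)"
    using suffix_factor_count_step[OF p(1,3)] unfolding t .
  have new_bounded: "0 < t \<longrightarrow> bounded_factors y t (Suc j) (factor y (t - max_lyndon_suffix y t) t)"
    using bounded_factors_next_suffix[OF _ tp _ j t bounded] p by simp
  have new_l: "Suc j - (l + ly k) = t" using lyk unfolding t p_def by simp
  show ?thesis
    unfolding inner_inv_def new_l
  proof (intro conjI)
    show "1 \<le> l + ly k" using I(1) by simp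
    have "ly k \<le> p" using lyk max_lyndon_suffix_le[OF p(1,3)] by simp
    then show "l + ly k \<le> max_lyndon_suffix y (Suc j)" using St new_l L p unfolding p_def by linarith
    show "k - ly k = j - (l + ly k)" using I(3) by simp
    show "Suc c + suffix_factor_count y t = suffix_factor_count y j" using I(5) count by simp
  qed (use tree new_bounded in auto)
qed

lemma while_option_invariant:
  fixes f :: "'s \<Rightarrow> nat"
  assumes step: "\<And>s. P s \<Longrightarrow> b s \<Longrightarrow> P (c s) \<and> f (c s) < f s" and init: "P s"
  obtains t where "while_option b c s = Some t" "P t" "\<not> b t"
proof -
  obtain t where t: "while_option b c s = Some t"
    using measure_while_option_Some[of P b c f, OF step init] by blast
  moreover have "P t" using while_option_rule[of P b c, OF _ t init] step by blast
  moreover have "\<not> b t" using while_option_stop[OF t] .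
  ultimately show thesis by (rule that)
qed

lemma inner_loop_correct:
  fixes y :: "'a::linorder list"
  assumes j: "Suc j \<le> length y"
    and ly: "\<forall>i \<le> j. ly i = max_lyndon_suffix y (Suc i)"
    and rt: "\<forall>i < j. is_llt (factor y (Suc i - ly i) (Suc i)) (Suc i - ly i) (rt i)"
  obtains q l k c where "inner_loop ly rt j = Some (q, l, k, c)"
    "is_llt (factor y (Suc j - ly j) (Suc j)) (Suc j - ly j) q"
    "c + suffix_factor_count y (Suc j) = Suc (suffix_factor_count y j)"
proof -
  let ?P = "\<lambda>(q, l, k, c). inner_inv y j q l k c"
  let ?b = "\<lambda>(q::ltree, l, k::nat, c::nat). l < ly j"
  let ?c = "\<lambda>(q, l, k, c::nat). (Node (rt k) q, l + ly k, k - ly k, Suc c)"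
  let ?f = "\<lambda>(q::ltree, l, k::nat, c::nat). ly j - l"
  have Lj: "ly j \<le> Suc j" using ly max_lyndon_suffix_le[of "Suc j" y] j by simp
  have step: "?P (?c s) \<and> ?f (?c s) < ?f s" if "?P s" "?b s" for s
  proof -
    obtain q l k c where s: "s = (q, l, k, c)" by (cases s) auto
    have inv: "inner_inv y j q l k c" and lt: "l < ly j" using that s by auto
    then have "k < j" using Lj unfolding inner_inv_def by auto
    then have "0 < ly k" using ly max_lyndon_suffix_pos[of "Suc k" y] j by simp
    then show ?thesis using inner_inv_step[OF j ly rt inv lt] s lt by simp
  qed
  have "factor y j (Suc j) = [y ! j]" using factor_singleton[of j y] j by simp
  then have "is_llt (factor y j (Suc j)) j (Leaf j)" by (simp add: llt_leaf)
  then have init: "?P (Leaf j, 1, j - 1, 0)"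
    using max_lyndon_suffix_pos[of "Suc j" y] j unfolding inner_inv_def by (simp add: bounded_factors_Suc)
  obtain r where r: "while_option ?b ?c (Leaf j, 1, j - 1, 0) = Some r" "?P r" "\<not> ?b r"
    using while_option_invariant[of ?P ?b ?c ?f, OF step init] by blast
  obtain q l k c where rr: "r = (q, l, k, c)" by (cases r) auto
  have "inner_inv y j q l k c" "l = ly j" using r(2,3) rr ly unfolding inner_inv_def by auto
  then have tree: "is_llt (factor y (Suc j - ly j) (Suc j)) (Suc j - ly j) q"
    and count: "c + suffix_factor_count y (Suc j - ly j) = suffix_factor_count y j"
    unfolding inner_inv_def by simp_all
  show thesis
  proof (rule that)
    show "inner_loop ly rt j = Some (q, l, k, c)" using r(1) rr unfolding inner_loop_def by simp
    show "is_llt (factor y (Suc j - ly j) (Suc j)) (Suc j - ly j) q" by (rule tree)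
    show "c + suffix_factor_count y (Suc j) = Suc (suffix_factor_count y j)"
      using suffix_factor_count_step[of "Suc j" y] count j ly by simp
  qed
qed

section \<open>The outer loop\<close>

text \<open>Duval's invariant after processing position \<open>j\<close>: \<open>y[0..j]\<close> is a prefix of a power of the
  Lyndon word \<open>y[0..per)\<close> and \<open>ii\<close> is the position of \<open>y[j + 1]\<close> within its period.\<close>
definition duval_inv :: "'a::linorder list \<Rightarrow> nat \<Rightarrow> alg_state \<Rightarrow> bool" where
  "duval_inv y j s \<longleftrightarrow> 0 < per s \<and> per s \<le> Suc j \<and> lyndon (factor y 0 (per s)) \<and>
     has_period y (per s) (Suc j) \<and> ii s = Suc j mod per s \<and>
     (\<forall>i\<le>j. lyns s i = max_lyndon_suffix y (Suc i))"

definition outer_inv :: "'a::linorder list \<Rightarrow> nat \<Rightarrow> alg_state \<Rightarrow> bool" where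
  "outer_inv y j s \<longleftrightarrow> duval_inv y j s \<and>
     (\<forall>i\<le>j. is_llt (factor y (Suc i - lyns s i) (Suc i)) (Suc i - lyns s i) (root s i)) \<and>
     cost s + suffix_factor_count y (Suc j) \<le> 2 * j + 1"

lemma duval_inv_step:
  fixes y :: "'a::linorder list"
  assumes Ly: "lyndon y" and J: "Suc j < length y" and inv: "duval_inv y j s"
  shows "duval_inv y (Suc j) (if \<not> y ! Suc j = y ! ii s
           then s\<lparr>lyns := (lyns s)(Suc j := Suc j + 1), per := Suc j + 1, ii := 0\<rparr>
           else s\<lparr>lyns := (lyns s)(Suc j := lyns s (ii s)), ii := (ii s + 1) mod per s\<rparr>)"
proof -
  define P where "P = per s"
  have I: "0 < P" "P \<le> Suc j" "lyndon (factor y 0 P)" "has_period y P (Suc j)" "ii s = Suc j mod P"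
    "\<forall>i\<le>j. lyns s i = max_lyndon_suffix y (Suc i)"
    using inv unfolding duval_inv_def P_def by auto
  show ?thesis
  proof (cases "y ! Suc j = y ! ii s")
    case False
    then have "y ! (Suc j mod P) < y ! Suc j"
      using lyndon_periodic_next_letter[OF Ly I(4,1,2) J] I(5) by auto
    then have lyn: "lyndon (factor y 0 (Suc (Suc j)))"
      using lyndon_periodic_extension[OF I(4,3,1,2) J] by simp
    then have "max_lyndon_suffix y (Suc (Suc j)) = Suc (Suc j)"
      using max_lyndon_suffix_whole[of "Suc (Suc j)" y] J by simp
    moreover have "has_period y (Suc (Suc j)) (Suc (Suc j))" unfolding has_period_def by simp
    ultimately show ?thesis using False lyn I(6) unfolding duval_inv_def by simp
  next
    case True
    have r: "Suc j mod P \<le> j" using I(1,2) by (meson less_Suc_eq_le mod_less_divisor order.strict_trans2)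
    have per: "has_period y P (Suc (Suc j))"
      using I(4) True I(5) unfolding has_period_def by (simp add: less_Suc_eq)
    have "is_max_lyndon_suffix y (Suc (Suc j mod P)) (max_lyndon_suffix y (Suc (Suc j mod P)))"
      using is_max_lyndon_suffix_max_lyndon_suffix[of "Suc (Suc j mod P)" y] r J by simp
    then have "max_lyndon_suffix y (Suc (Suc j)) = lyns s (ii s)"
      using max_lyndon_suffix_eqI[OF _ _ max_lyndon_suffix_periodic[OF per I(3,1,2) J]] I(5,6) r J
      by simp
    moreover have "(ii s + 1) mod P = Suc (Suc j) mod P" using I(5) by (simp add: mod_Suc_eq)
    ultimately show ?thesis
      using True I per unfolding duval_inv_def P_def by (auto simp: le_Suc_eq)
  qed
qed

lemma outer_inv_step:
  fixes y :: "'a::linorder list"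
  assumes Ly: "lyndon y" and J: "Suc j < length y" and inv: "outer_inv y j s"
  obtains s' where "alg_step (\<lambda>i k. y ! i = y ! k) (Suc j) s = Some s'" "outer_inv y (Suc j) s'"
proof -
  define s1 where "s1 = (if \<not> y ! Suc j = y ! ii s
           then s\<lparr>lyns := (lyns s)(Suc j := Suc j + 1), per := Suc j + 1, ii := 0\<rparr>
           else s\<lparr>lyns := (lyns s)(Suc j := lyns s (ii s)), ii := (ii s + 1) mod per s\<rparr>)"
  have duval: "duval_inv y (Suc j) s1"
    using duval_inv_step[OF Ly J] inv unfolding s1_def outer_inv_def by simp
  have unchanged: "root s1 = root s" "cost s1 = cost s" unfolding s1_def by simp_all
  have ly: "\<forall>i \<le> Suc j. lyns s1 i = max_lyndon_suffix y (Suc i)"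
    using duval unfolding duval_inv_def by simp
  have "\<forall>i \<le> j. lyns s1 i = lyns s i" using ly inv unfolding outer_inv_def duval_inv_def by simp
  then have rt: "\<forall>i < Suc j. is_llt (factor y (Suc i - lyns s1 i) (Suc i)) (Suc i - lyns s1 i) (root s1 i)"
    using inv unchanged unfolding outer_inv_def by simp
  obtain q l k c where loop: "inner_loop (lyns s1) (root s1) (Suc j) = Some (q, l, k, c)"
    and tree: "is_llt (factor y (Suc (Suc j) - lyns s1 (Suc j)) (Suc (Suc j))) (Suc (Suc j) - lyns s1 (Suc j)) q"
    and count: "c + suffix_factor_count y (Suc (Suc j)) = Suc (suffix_factor_count y (Suc j))"
    by (rule inner_loop_correct[of "Suc j" y "lyns s1" "root s1", OF _ ly rt]) (use J in simp)
  define s' where "s' = s1\<lparr>root := (root s1)(Suc j := q), cost := cost s1 + 1 + c\<rparr>"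
  show thesis
  proof (rule that)
    show "alg_step (\<lambda>i k. y ! i = y ! k) (Suc j) s = Some s'"
      using loop unfolding alg_step_def Let_def s'_def s1_def by simp
    show "outer_inv y (Suc j) s'"
      unfolding outer_inv_def
    proof (intro conjI allI impI)
      show "duval_inv y (Suc j) s'" using duval unfolding duval_inv_def s'_def by simp
      show "cost s' + suffix_factor_count y (Suc (Suc j)) \<le> 2 * Suc j + 1"
        using inv count unchanged unfolding outer_inv_def s'_def by simp
      fix i assume "i \<le> Suc j"
      then show "is_llt (factor y (Suc i - lyns s' i) (Suc i)) (Suc i - lyns s' i) (root s' i)"
        using tree rt unfolding s'_def by (cases "i = Suc j") auto
    qed
  qed
qed

lemma outer_inv_init: "0 < length y \<Longrightarrow> outer_inv y 0 alg_init"
proof -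
  assume len: "0 < length y"
  then have single: "factor y 0 1 = [y ! 0]" using factor_singleton[of 0 y] by simp
  then have lyns: "max_lyndon_suffix y 1 = 1"
    by (intro max_lyndon_suffix_whole) (use len lyndon_singleton in \<open>simp_all add: Suc_le_eq\<close>)
  then have "suffix_factor_count y 1 = 1"
    using suffix_factor_count_step[of 1 y] len by (simp add: suffix_factor_count.simps)
  then show ?thesis
    unfolding outer_inv_def duval_inv_def alg_init_def has_period_def
    using single lyns lyndon_singleton llt_leaf[of "[y ! 0]" 0] by simp
qed

lemma outer_inv_run:
  fixes y :: "'a::linorder list"
  assumes "lyndon y" "j < length y"
  shows "\<exists>s. alg_run (\<lambda>i k. y ! i = y ! k) j = Some s \<and> outer_inv y j s"
  using assms(2)
proof (induction j)
  case 0
  then show ?case using outer_inv_init by simp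
next
  case (Suc j)
  then obtain s where s: "alg_run (\<lambda>i k. y ! i = y ! k) j = Some s" "outer_inv y j s" by auto
  obtain s' where "alg_step (\<lambda>i k. y ! i = y ! k) (Suc j) s = Some s'" "outer_inv y (Suc j) s'"
    using outer_inv_step[OF assms(1) Suc.prems s(2)] .
  then show ?case using s by simp
qed

theorem proposition4:
  "\<exists>c::nat. \<forall>y :: 'a::linorder list. lyndon y \<longrightarrow>
     (\<exists>t cst. left_lyndon_tree (length y) (\<lambda>i j. y ! i = y ! j) = Some (t, cst)
              \<and> is_llt y 0 t \<and> cst \<le> c * length y)"
proof (intro exI[of _ 2] allI impI)
  fix y :: "'a list" assume Ly: "lyndon y"
  define n where "n = length y"
  have n: "0 < n" using Ly unfolding lyndon_def n_def by simp
  obtain s where run: "alg_run (\<lambda>i j. y ! i = y ! j) (n - 1) = Some s" and inv: "outer_inv y (n - 1) s"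
    using outer_inv_run[OF Ly, of "n - 1"] n unfolding n_def by auto
  have "lyns s (n - 1) = max_lyndon_suffix y n" using inv n unfolding outer_inv_def duval_inv_def by simp
  also have "\<dots> = n"
    by (rule max_lyndon_suffix_whole) (use n Ly factor_whole[of y] in \<open>simp_all add: n_def\<close>)
  finally have "is_llt y 0 (root s (n - 1))"
    using inv n factor_whole[of y] unfolding outer_inv_def n_def by fastforce
  moreover have "cost s \<le> 2 * n" using inv n unfolding outer_inv_def by auto
  moreover have "left_lyndon_tree n (\<lambda>i j. y ! i = y ! j) = Some (root s (n - 1), cost s)"
    unfolding left_lyndon_tree_def using run by simp
  ultimately show "\<exists>t cst. left_lyndon_tree (length y) (\<lambda>i j. y ! i = y ! j) = Some (t, cst)
      \<and> is_llt y 0 t \<and> cst \<le> 2 * length y"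
    unfolding n_def by blast
qed

end
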